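(* Let $k\geq 1$ and let $T$ be a binary phylogenetic $X$-tree with $|X| = 2k$. If $\mathcal{P}=\{P_1,\ldots,P_k\}$ and $\mathcal{Q}=\{Q_1,\ldots,Q_k\}$ are both sets of $k$ pairwise edge-disjoint leaf-to-leaf paths in $T$, then $\mathcal{P}=\mathcal{Q}$; i.e., $T$ has exactly one set of $k$ pairwise edge-disjoint leaf-to-leaf paths.
   Context: A phylogenetic $X$-tree is a tree with no vertices of degree 2 whose leaves are bijectively labelled by (and identified with) $X$; binary means maximum degree 3. A leaf-to-leaf path is a path whose two endpoints are (distinct) leaves; paths are considered unordered (a path and its reverse are the same). *)

theory Defs
  imports Main
begin

definition simple_graph :: "'a set \<Rightarrow> 'a set set \<Rightarrow> bool" where
  "simple_graph V E \<longleftrightarrow> finite V \<and>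
     (\<forall>e\<in>E. \<exists>a b. a \<noteq> b \<and> a \<in> V \<and> b \<in> V \<and> e = {a, b})"

definition degree :: "'a set set \<Rightarrow> 'a \<Rightarrow> nat" where
  "degree E v = card {e\<in>E. v \<in> e}"

definition path_edges :: "'a list \<Rightarrow> 'a set set" where
  "path_edges ps = set (map (\<lambda>(a, b). {a, b}) (zip ps (tl ps)))"

definition is_path :: "'a set \<Rightarrow> 'a set set \<Rightarrow> 'a list \<Rightarrow> bool" where
  "is_path V E ps \<longleftrightarrow> ps \<noteq> [] \<and> distinct ps \<and> set ps \<subseteq> V \<and> path_edges ps \<subseteq> E"

definition is_cycle :: "'a set \<Rightarrow> 'a set set \<Rightarrow> 'a list \<Rightarrow> bool" where
  "is_cycle V E cs \<longleftrightarrow> length cs \<ge> 3 \<and> is_path V E cs \<and> {last cs, hd cs} \<in> E"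

definition connected_graph :: "'a set \<Rightarrow> 'a set set \<Rightarrow> bool" where
  "connected_graph V E \<longleftrightarrow>
     (\<forall>u\<in>V. \<forall>v\<in>V. \<exists>ps. is_path V E ps \<and> hd ps = u \<and> last ps = v)"

definition is_tree :: "'a set \<Rightarrow> 'a set set \<Rightarrow> bool" where
  "is_tree V E \<longleftrightarrow> simple_graph V E \<and> V \<noteq> {} \<and> connected_graph V E \<and>
     \<not> (\<exists>cs. is_cycle V E cs)"

(* leaves: vertices of degree at most 1 (degree 0 only occurs for the one-vertex tree) *)
definition leaves :: "'a set \<Rightarrow> 'a set set \<Rightarrow> 'a set" where
  "leaves V E = {v\<in>V. degree E v \<le> 1}"

(* phylogenetic X-tree: a tree without degree-2 vertices whose leaf set is X
   (leaves are identified with their labels) *)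
definition phylo_tree :: "'a set \<Rightarrow> 'a set \<Rightarrow> 'a set set \<Rightarrow> bool" where
  "phylo_tree X V E \<longleftrightarrow> is_tree V E \<and> (\<forall>v\<in>V. degree E v \<noteq> 2) \<and> leaves V E = X"

definition binary_phylo_tree :: "'a set \<Rightarrow> 'a set \<Rightarrow> 'a set set \<Rightarrow> bool" where
  "binary_phylo_tree X V E \<longleftrightarrow> phylo_tree X V E \<and> (\<forall>v\<in>V. degree E v \<le> 3)"

definition leaf_path_seq :: "'a set \<Rightarrow> 'a set set \<Rightarrow> 'a list \<Rightarrow> bool" where
  "leaf_path_seq V E ps \<longleftrightarrow> is_path V E ps \<and> hd ps \<noteq> last ps \<and>
     hd ps \<in> leaves V E \<and> last ps \<in> leaves V E"

(* unordered path: a path identified with its reverse *)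
definition upath :: "'a list \<Rightarrow> 'a list set" where
  "upath ps = {ps, rev ps}"

definition leaf_to_leaf_paths :: "'a set \<Rightarrow> 'a set set \<Rightarrow> 'a list set set" where
  "leaf_to_leaf_paths V E = {upath ps | ps. leaf_path_seq V E ps}"

definition upath_edges :: "'a list set \<Rightarrow> 'a set set" where
  "upath_edges P = (\<Union>ps\<in>P. path_edges ps)"

definition pairwise_edge_disjoint :: "'a list set set \<Rightarrow> bool" where
  "pairwise_edge_disjoint \<P> \<longleftrightarrow>
     (\<forall>P\<in>\<P>. \<forall>Q\<in>\<P>. P \<noteq> Q \<longrightarrow> upath_edges P \<inter> upath_edges Q = {})"

end

theory Submission
  imports Defs
begin

(*
  Let U be the set of edges covered by k pairwise edge-disjoint leaf-to-leaf paths in a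
  binary tree with 2k leaves. Two such paths cannot end at the same leaf (it has only one
  edge), so every leaf is the end of exactly one path. Hence U contains every pendant edge,
  each path contributes 0 or 2 edges of U at an inner vertex, and so inner vertices have even
  U-degree, which is at most 2 as the tree is binary. For two such packings the symmetric
  difference of their edge sets has even degree everywhere, and a forest has no nonempty
  subgraph with all degrees even; thus both packings cover the same U. In a graph of maximum
  degree 2 a path starting at a vertex of degree 1 is forced, so the paths starting at any
  leaf coincide.
*)

lemma path_edges_Nil [simp]: "path_edges [] = {}"
  and path_edges_singleton [simp]: "path_edges [a] = {}"
  and path_edges_Cons_Cons [simp]: "path_edges (a # b # xs) = insert {a, b} (path_edges (b # xs))"
  by (simp_all add: path_edges_def)

lemma path_edges_append:
  "xs \<noteq> [] \<Longrightarrow> ys \<noteq> [] \<Longrightarrow>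
    path_edges (xs @ ys) = path_edges xs \<union> insert {last xs, hd ys} (path_edges ys)"
proof (induction xs rule: induct_list012)
  case (2 x) thus ?case by (cases ys) auto
qed auto

lemma path_edges_rev [simp]: "path_edges (rev xs) = path_edges xs"
proof (induction xs rule: induct_list012)
  case (3 x y zs)
  have "path_edges (rev (x # y # zs)) = path_edges (rev (y # zs) @ [x])" by simp
  also have "\<dots> = path_edges (y # zs) \<union> {{y, x}}"
    using 3 by (subst path_edges_append) (auto simp: last_rev)
  finally show ?case by (auto simp: insert_commute)
qed auto

lemma path_edges_subset_set: "e \<in> path_edges xs \<Longrightarrow> e \<subseteq> set xs"
  by (induction xs rule: induct_list012) auto

lemma path_edges_prefix: "path_edges xs \<subseteq> path_edges (xs @ ys)"
  by (cases "xs = [] \<or> ys = []") (auto simp: path_edges_append)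

lemma finite_path_edges [simp]: "finite (path_edges xs)"
  by (simp add: path_edges_def)

lemma card_path_edges_at_inner_vertex:
  assumes "distinct ps" "v \<in> set ps" "v \<noteq> hd ps" "v \<noteq> last ps"
  shows "card {e \<in> path_edges ps. v \<in> e} = 2"
proof -
  obtain xs ys where ps: "ps = xs @ v # ys" using assms(2) split_list by metis
  have xs: "xs \<noteq> []" using assms(3) ps by auto
  obtain b zs where ys: "ys = b # zs" using assms(4) ps by (cases ys) auto
  have v_notin: "v \<notin> set xs" "v \<notin> set ys" using assms(1) ps by auto
  have "path_edges ps = path_edges xs \<union> insert {last xs, v} (insert {v, b} (path_edges ys))"
    using ps xs ys by (simp add: path_edges_append)
  then have "{e \<in> path_edges ps. v \<in> e} = {{last xs, v}, {v, b}}"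
    using v_notin path_edges_subset_set by auto
  moreover have "{last xs, v} \<noteq> {v, b}"
    using assms(1) ps xs ys by (auto simp: doubleton_eq_iff)
  ultimately show ?thesis by simp
qed

lemma card_le_degree: "finite U \<Longrightarrow> S \<subseteq> {e \<in> U. v \<in> e} \<Longrightarrow> card S \<le> degree U v"
  unfolding degree_def by (rule card_mono) auto

lemma neighbour_unique_if_degree_le_1:
  assumes "finite U" "degree U x \<le> 1" "{x, b} \<in> U" "{x, b'} \<in> U"
  shows "b = b'"
proof (rule ccontr)
  assume "b \<noteq> b'"
  then have "card {{x, b}, {x, b'}} = 2" by (auto simp: doubleton_eq_iff)
  moreover have "card {{x, b}, {x, b'}} \<le> degree U x"
    using assms by (intro card_le_degree) auto
  ultimately show False using assms(2) by simp
qed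

lemma neighbour_unique_if_degree_le_2:
  assumes "finite U" "degree U a \<le> 2" "{c, a} \<in> U" "{a, b} \<in> U" "{a, b'} \<in> U"
    and "c \<noteq> a" "c \<noteq> b" "c \<noteq> b'"
  shows "b = b'"
proof (rule ccontr)
  assume "b \<noteq> b'"
  then have "card {{c, a}, {a, b}, {a, b'}} = 3"
    using assms(6-8) by (auto simp: doubleton_eq_iff)
  moreover have "card {{c, a}, {a, b}, {a, b'}} \<le> degree U a"
    using assms by (intro card_le_degree) auto
  ultimately show False using assms(2) by simp
qed

(* c is the vertex before a: its edge at a leaves room for only one continuation. *)
lemma max_degree_2_path_continuation_unique:
  assumes fin: "finite U" and deg: "\<And>v. degree U v \<le> 2"
  shows "distinct (c # a # p) \<Longrightarrow> distinct (c # a # q) \<Longrightarrow>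
    path_edges (c # a # p) \<subseteq> U \<Longrightarrow> path_edges (c # a # q) \<subseteq> U \<Longrightarrow>
    degree U (last (a # p)) = 1 \<Longrightarrow> degree U (last (a # q)) = 1 \<Longrightarrow> p = q"
proof (induction p arbitrary: c a q)
  case Nil
  show ?case
  proof (cases q)
    case (Cons b q')
    then have "c = b"
      using Nil.prems neighbour_unique_if_degree_le_1[OF fin, of a c b] by (auto simp: insert_commute)
    then show ?thesis using Nil.prems(2) Cons by simp
  qed simp
next
  case (Cons b p)
  show ?case
  proof (cases q)
    case Nil
    then have "c = b"
      using Cons.prems neighbour_unique_if_degree_le_1[OF fin, of a c b] by (auto simp: insert_commute)
    then show ?thesis using Cons.prems(1) by simp
  next
    case (Cons b' q')
    then have "b = b'"
      using Cons.prems by (intro neighbour_unique_if_degree_le_2[OF fin deg, of c]) auto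
    then show ?thesis using Cons.IH[of a b q'] Cons.prems \<open>q = b' # q'\<close> by auto
  qed
qed

lemma max_degree_2_path_unique:
  assumes fin: "finite U" and deg: "\<And>v. degree U v \<le> 2"
    and "distinct p" "distinct q" "path_edges p \<subseteq> U" "path_edges q \<subseteq> U"
    and "length p \<ge> 2" "length q \<ge> 2" "hd p = hd q"
    and "degree U (hd p) = 1" "degree U (last p) = 1" "degree U (last q) = 1"
  shows "p = q"
proof -
  obtain x b p' where p: "p = x # b # p'" using assms(7) by (cases p; cases "tl p") auto
  obtain b' q' where q: "q = x # b' # q'" using assms(8,9) p by (cases q; cases "tl q") auto
  have "b = b'"
    using assms(5,6,10) p q by (intro neighbour_unique_if_degree_le_1[OF fin, of x]) auto
  moreover have "p' = q'"
    using assms(3-6,11,12) p q \<open>b = b'\<close>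
    by (intro max_degree_2_path_continuation_unique[OF fin deg, of x b]) auto
  ultimately show ?thesis using p q by simp
qed

lemma forest_even_subgraph_path_extends:
  assumes simple: "simple_graph V E" and acyclic: "\<nexists>cs. is_cycle V E cs"
    and "D \<subseteq> E" "finite D" "even (degree D u)"
    and path: "distinct (u # b # rest)" "set (u # b # rest) \<subseteq> V" "path_edges (u # b # rest) \<subseteq> D"
  obtains w where "w \<in> V" "w \<notin> set (u # b # rest)" "{w, u} \<in> D"
proof -
  have "{u, b} \<in> D" using path(3) by simp
  then have "degree D u \<noteq> 0" using \<open>finite D\<close> by (auto simp: degree_def)
  then have "degree D u \<ge> 2" using \<open>even (degree D u)\<close> by presburger
  then have "\<not> {e \<in> D. u \<in> e} \<subseteq> {{u, b}}"
    unfolding degree_def using card_mono[of "{{u, b}}" "{e \<in> D. u \<in> e}"] by auto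
  then obtain e where e: "e \<in> D" "u \<in> e" "e \<noteq> {u, b}" by auto
  moreover obtain a c where "a \<noteq> c" "a \<in> V" "c \<in> V" "e = {a, c}"
    using simple e(1) \<open>D \<subseteq> E\<close> unfolding simple_graph_def by blast
  ultimately obtain w where w: "e = {u, w}" "w \<noteq> u" "w \<in> V" by auto
  have "w \<notin> set (u # b # rest)"
  proof
    assume "w \<in> set (u # b # rest)"
    then have "w \<in> set rest" using w e(3) by auto
    then obtain xs ys where rest: "rest = xs @ w # ys" using split_list by metis
    define cs where "cs = u # b # xs @ [w]"
    have "path_edges cs \<subseteq> D"
      using path(3) path_edges_prefix[of cs ys] rest by (auto simp: cs_def)
    moreover have "distinct cs" "set cs \<subseteq> V"
      using path(1,2) rest by (auto simp: cs_def)
    moreover have "{last cs, hd cs} \<in> E"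
      using e(1) w(1) \<open>D \<subseteq> E\<close> by (auto simp: cs_def insert_commute)
    moreover have "length cs \<ge> 3" by (simp add: cs_def)
    ultimately have "is_cycle V E cs"
      using \<open>D \<subseteq> E\<close> unfolding is_cycle_def is_path_def by auto
    then show False using acyclic by blast
  qed
  then show thesis using that w e(1) by (simp add: insert_commute)
qed

lemma forest_even_subgraph_empty:
  assumes simple: "simple_graph V E" and acyclic: "\<nexists>cs. is_cycle V E cs"
    and "D \<subseteq> E" "finite D" and even: "\<And>v. even (degree D v)"
  shows "D = {}"
proof -
  have no_path: "\<not> (distinct ps \<and> set ps \<subseteq> V \<and> length ps \<ge> 2 \<and> path_edges ps \<subseteq> D)" for ps
  proof (induction "card V - length ps" arbitrary: ps rule: less_induct)
    case less
    show ?case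
    proof
      assume ps: "distinct ps \<and> set ps \<subseteq> V \<and> length ps \<ge> 2 \<and> path_edges ps \<subseteq> D"
      then obtain u b rest where ps_eq: "ps = u # b # rest" by (cases ps; cases "tl ps") auto
      obtain w where w: "w \<in> V" "w \<notin> set ps" "{w, u} \<in> D"
        using forest_even_subgraph_path_extends[OF simple acyclic assms(3,4) even, of u b rest]
          ps unfolding ps_eq by blast
      have "card (set (w # ps)) \<le> card V"
        using simple ps w by (intro card_mono) (auto simp: simple_graph_def)
      then have "card V - length (w # ps) < card V - length ps"
        using ps w by (simp add: distinct_card)
      then have "\<not> (distinct (w # ps) \<and> set (w # ps) \<subseteq> V \<and> length (w # ps) \<ge> 2
          \<and> path_edges (w # ps) \<subseteq> D)"
        by (rule less)
      then show False using ps ps_eq w by simp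
    qed
  qed
  show "D = {}"
  proof (rule ccontr)
    assume "D \<noteq> {}"
    then obtain e where "e \<in> D" by blast
    then obtain a c where "a \<noteq> c" "a \<in> V" "c \<in> V" "e = {a, c}"
      using simple \<open>D \<subseteq> E\<close> unfolding simple_graph_def by blast
    then show False using no_path[of "[a, c]"] \<open>e \<in> D\<close> by simp
  qed
qed

definition covered_edges :: "'a list set set \<Rightarrow> 'a set set" where
  "covered_edges \<P> = (\<Union>P\<in>\<P>. upath_edges P)"

definition upath_ends :: "'a list set \<Rightarrow> 'a set" where
  "upath_ends P = hd ` P"

lemma upath_edges_upath [simp]: "upath_edges (upath ps) = path_edges ps"
  by (simp add: upath_edges_def upath_def)

lemma upath_ends_upath: "ps \<noteq> [] \<Longrightarrow> upath_ends (upath ps) = {hd ps, last ps}"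
  by (auto simp: upath_ends_def upath_def hd_rev)

lemma leaf_path_seq_rev: "leaf_path_seq V E ps \<Longrightarrow> leaf_path_seq V E (rev ps)"
  by (auto simp: leaf_path_seq_def is_path_def hd_rev last_rev)

lemma leaf_path_seq_length: "leaf_path_seq V E ps \<Longrightarrow> length ps \<ge> 2"
  by (cases ps; cases "tl ps") (auto simp: leaf_path_seq_def is_path_def)

lemma leaf_to_leaf_paths_member:
  assumes "P \<in> leaf_to_leaf_paths V E" "ps \<in> P"
  shows "leaf_path_seq V E ps" "P = upath ps"
proof -
  obtain ps0 where "P = upath ps0" "leaf_path_seq V E ps0"
    using assms(1) by (auto simp: leaf_to_leaf_paths_def)
  moreover have "ps = ps0 \<or> ps = rev ps0" using assms(2) calculation by (auto simp: upath_def)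
  ultimately show "leaf_path_seq V E ps" "P = upath ps"
    by (auto simp: leaf_path_seq_rev upath_def)
qed

lemma simple_graph_edges_subset: "simple_graph V E \<Longrightarrow> E \<subseteq> Pow V"
  unfolding simple_graph_def by auto

lemma simple_graph_finite_edges: "simple_graph V E \<Longrightarrow> finite E"
  using simple_graph_edges_subset finite_subset by (fastforce simp: simple_graph_def)

lemma incident_edges_leaf:
  assumes simple: "simple_graph V E" and leaf: "x \<in> leaves V E" and xb: "{x, b} \<in> E"
  shows "{e \<in> E. x \<in> e} = {{x, b}}"
proof -
  have "e = {x, b}" if e: "e \<in> E" "x \<in> e" for e
  proof -
    obtain a c where "e = {a, c}" using simple e(1) unfolding simple_graph_def by blast
    then obtain w where w: "e = {x, w}" using e(2) by blast
    have "degree E x \<le> 1" using leaf by (simp add: leaves_def)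
    then have "w = b"
      using neighbour_unique_if_degree_le_1[OF simple_graph_finite_edges[OF simple]] xb e(1) w
      by metis
    then show ?thesis using w by simp
  qed
  then show ?thesis using xb by blast
qed

lemma even_degree_covered_edges:
  assumes "finite \<P>" "pairwise_edge_disjoint \<P>"
    and inner: "\<And>P. P \<in> \<P> \<Longrightarrow> \<exists>ps. P = upath ps \<and> distinct ps \<and> v \<noteq> hd ps \<and> v \<noteq> last ps"
  shows "even (degree (covered_edges \<P>) v)"
proof -
  define S where "S P = {e \<in> upath_edges P. v \<in> e}" for P
  have "{e \<in> covered_edges \<P>. v \<in> e} = (\<Union>P\<in>\<P>. S P)"
    by (auto simp: covered_edges_def S_def)
  moreover have "S P \<inter> S Q = {}" if "P \<in> \<P>" "Q \<in> \<P>" "P \<noteq> Q" for P Q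
    using assms(2) that unfolding pairwise_edge_disjoint_def S_def by blast
  moreover have S_finite_even: "finite (S P) \<and> even (card (S P))" if P: "P \<in> \<P>" for P
  proof -
    obtain ps where ps: "P = upath ps" "distinct ps" "v \<noteq> hd ps" "v \<noteq> last ps"
      using inner[OF P] by blast
    have "S P = {e \<in> path_edges ps. v \<in> e}" by (simp add: S_def ps(1))
    moreover have "{e \<in> path_edges ps. v \<in> e} = {}" if "v \<notin> set ps"
      using that path_edges_subset_set by blast
    ultimately show ?thesis
      using card_path_edges_at_inner_vertex[OF ps(2) _ ps(3,4)] by (cases "v \<in> set ps") auto
  qed
  ultimately have "degree (covered_edges \<P>) v = (\<Sum>P\<in>\<P>. card (S P))"
    unfolding degree_def using assms(1) by (simp add: card_UN_disjoint)
  also have "even \<dots>"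
    using S_finite_even by (simp add: dvd_sum)
  finally show ?thesis .
qed

lemma leaf_paths_edge_disjoint_ends_disjoint:
  assumes simple: "simple_graph V E"
    and P: "P \<in> leaf_to_leaf_paths V E" and Q: "Q \<in> leaf_to_leaf_paths V E"
    and disjoint: "upath_edges P \<inter> upath_edges Q = {}"
  shows "upath_ends P \<inter> upath_ends Q = {}"
proof (rule ccontr)
  assume "upath_ends P \<inter> upath_ends Q \<noteq> {}"
  then obtain ps qs where ps: "ps \<in> P" and qs: "qs \<in> Q" and hd_eq: "hd ps = hd qs"
    unfolding upath_ends_def by blast
  note lp = leaf_to_leaf_paths_member[OF P ps] leaf_to_leaf_paths_member[OF Q qs]
  obtain x b ps' where ps_eq: "ps = x # b # ps'"
    using leaf_path_seq_length[OF lp(1)] by (cases ps; cases "tl ps") auto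
  obtain b' qs' where qs_eq: "qs = x # b' # qs'"
    using leaf_path_seq_length[OF lp(3)] hd_eq ps_eq by (cases qs; cases "tl qs") auto
  have leaf: "x \<in> leaves V E" and xb: "{x, b} \<in> E" and xb': "{x, b'} \<in> E"
    using lp(1,3) ps_eq qs_eq by (simp_all add: leaf_path_seq_def is_path_def)
  have incident: "{e \<in> E. x \<in> e} = {{x, b}}" by (rule incident_edges_leaf[OF simple leaf xb])
  have "{x, b'} \<in> {e \<in> E. x \<in> e}" using xb' by simp
  then have "{x, b'} = {x, b}" unfolding incident by simp
  then have "{x, b} \<in> upath_edges P \<inter> upath_edges Q"
    using lp(2,4) ps_eq qs_eq by simp
  then show False using disjoint by blast
qed

lemma even_card_sym_diff:
  assumes "finite A" "finite B" "even (card A)" "even (card B)"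
  shows "even (card (sym_diff A B))"
proof -
  have "card (sym_diff A B) = card (A - B) + card (B - A)"
    by (rule card_Un_disjoint) (use assms in auto)
  moreover have "card A = card (A \<inter> B) + card (A - B)" "card B = card (A \<inter> B) + card (B - A)"
    using card_Int_Diff[OF assms(1), of B] card_Int_Diff[OF assms(2), of A]
    by (simp_all add: Int_commute)
  ultimately show ?thesis using assms(3,4) by presburger
qed

locale perfect_leaf_path_packing =
  fixes X V :: "'a set" and E :: "'a set set" and \<P> :: "'a list set set"
  assumes binary_tree: "binary_phylo_tree X V E"
    and leaf_paths: "\<P> \<subseteq> leaf_to_leaf_paths V E"
    and edge_disjoint: "pairwise_edge_disjoint \<P>"
    and finite_packing: "finite \<P>"
    and card_leaves: "card X = 2 * card \<P>"
begin

lemma simple: "simple_graph V E"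
  and acyclic: "\<nexists>cs. is_cycle V E cs"
  and leaves_eq: "leaves V E = X"
  using binary_tree by (auto simp: binary_phylo_tree_def phylo_tree_def is_tree_def)

lemma degree_le_3: "degree E v \<le> 3"
proof (cases "v \<in> V")
  case False
  then have "{e \<in> E. v \<in> e} = {}" using simple_graph_edges_subset[OF simple] by blast
  then show ?thesis unfolding degree_def by (metis card.empty zero_le)
qed (use binary_tree in \<open>simp add: binary_phylo_tree_def\<close>)

lemma finite_leaves: "finite X"
  using simple leaves_eq by (auto simp: simple_graph_def leaves_def)

lemma packing_member:
  assumes "P \<in> \<P>" "ps \<in> P"
  shows "leaf_path_seq V E ps" "P = upath ps"
  using leaf_to_leaf_paths_member assms leaf_paths by blast+

lemma path_edges_subset_covered_edges:
  "P \<in> \<P> \<Longrightarrow> ps \<in> P \<Longrightarrow> path_edges ps \<subseteq> covered_edges \<P>"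
  by (auto simp: covered_edges_def upath_edges_def)

lemma covered_edges_subset: "covered_edges \<P> \<subseteq> E"
  unfolding covered_edges_def upath_edges_def
proof (intro UN_least)
  fix P ps assume "P \<in> \<P>" "ps \<in> P"
  then show "path_edges ps \<subseteq> E"
    using packing_member(1) by (simp add: leaf_path_seq_def is_path_def)
qed

lemma finite_covered_edges: "finite (covered_edges \<P>)"
  using covered_edges_subset simple_graph_finite_edges[OF simple] by (rule finite_subset)

lemma ends_cover_leaves: "(\<Union>P\<in>\<P>. upath_ends P) = X"
proof -
  have ends: "upath_ends P \<subseteq> X" "card (upath_ends P) = 2" if P: "P \<in> \<P>" for P
  proof -
    obtain ps where "P = upath ps" "leaf_path_seq V E ps"
      using P leaf_paths by (auto simp: leaf_to_leaf_paths_def)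
    then show "upath_ends P \<subseteq> X" "card (upath_ends P) = 2" using leaves_eq
      by (auto simp: upath_ends_upath leaf_path_seq_def is_path_def)
  qed
  have disjoint: "upath_ends P \<inter> upath_ends Q = {}" if "P \<in> \<P>" "Q \<in> \<P>" "P \<noteq> Q" for P Q
  proof (rule leaf_paths_edge_disjoint_ends_disjoint[OF simple])
    show "P \<in> leaf_to_leaf_paths V E" "Q \<in> leaf_to_leaf_paths V E" using that leaf_paths by auto
    show "upath_edges P \<inter> upath_edges Q = {}"
      using that edge_disjoint unfolding pairwise_edge_disjoint_def by simp
  qed
  have "card (\<Union>P\<in>\<P>. upath_ends P) = (\<Sum>P\<in>\<P>. card (upath_ends P))"
    using finite_packing ends(1) finite_leaves disjoint
    by (intro card_UN_disjoint) (auto intro: finite_subset)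
  also have "\<dots> = card X" using ends(2) card_leaves by simp
  finally show ?thesis
    using ends(1) by (intro card_subset_eq[OF finite_leaves]) auto
qed

lemma leaf_is_start:
  assumes "x \<in> X"
  obtains P ps where "P \<in> \<P>" "ps \<in> P" "hd ps = x"
  using assms ends_cover_leaves by (auto simp: upath_ends_def)

lemma incident_covered_edges_leaf:
  assumes "x \<in> X"
  shows "{e \<in> covered_edges \<P>. x \<in> e} = {e \<in> E. x \<in> e}"
    and "degree (covered_edges \<P>) x = 1"
proof -
  obtain P ps where P: "P \<in> \<P>" "ps \<in> P" "hd ps = x" using leaf_is_start[OF assms] .
  note lp = packing_member[OF P(1,2)]
  obtain b ps' where ps: "ps = x # b # ps'"
    using leaf_path_seq_length[OF lp(1)] P(3) by (cases ps; cases "tl ps") auto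
  have xb: "{x, b} \<in> covered_edges \<P>" using path_edges_subset_covered_edges[OF P(1,2)] ps by simp
  have "{e \<in> E. x \<in> e} = {{x, b}}"
    using xb covered_edges_subset assms leaves_eq by (intro incident_edges_leaf[OF simple]) auto
  then show incident: "{e \<in> covered_edges \<P>. x \<in> e} = {e \<in> E. x \<in> e}"
    using xb covered_edges_subset by auto
  show "degree (covered_edges \<P>) x = 1"
    unfolding degree_def incident \<open>{e \<in> E. x \<in> e} = {{x, b}}\<close> by simp
qed

lemma even_degree_covered_edges_inner:
  assumes "v \<notin> X"
  shows "even (degree (covered_edges \<P>) v)"
proof (rule even_degree_covered_edges[OF finite_packing edge_disjoint])
  fix P assume "P \<in> \<P>"
  then obtain ps where "P = upath ps" "leaf_path_seq V E ps"
    using leaf_paths by (auto simp: leaf_to_leaf_paths_def)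
  then show "\<exists>ps. P = upath ps \<and> distinct ps \<and> v \<noteq> hd ps \<and> v \<noteq> last ps"
    using assms leaves_eq by (auto simp: leaf_path_seq_def is_path_def)
qed

lemma degree_covered_edges_le_2: "degree (covered_edges \<P>) v \<le> 2"
proof (cases "v \<in> X")
  case True
  then show ?thesis using incident_covered_edges_leaf(2) by simp
next
  case False
  have "degree (covered_edges \<P>) v \<le> degree E v"
    unfolding degree_def using covered_edges_subset simple_graph_finite_edges[OF simple]
    by (intro card_mono) auto
  then show ?thesis using degree_le_3[of v] even_degree_covered_edges_inner[OF False] by presburger
qed

lemma covered_edges_unique:
  assumes "perfect_leaf_path_packing X V E \<Q>"
  shows "covered_edges \<Q> = covered_edges \<P>"
proof -
  interpret Q: perfect_leaf_path_packing X V E \<Q> by fact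
  define D where "D = sym_diff (covered_edges \<P>) (covered_edges \<Q>)"
  have "even (degree D v)" for v
  proof -
    have incident: "{e \<in> D. v \<in> e} =
        sym_diff {e \<in> covered_edges \<P>. v \<in> e} {e \<in> covered_edges \<Q>. v \<in> e}"
      unfolding D_def by blast
    show ?thesis
    proof (cases "v \<in> X")
      case True
      then show ?thesis
        unfolding degree_def incident
        using incident_covered_edges_leaf(1) Q.incident_covered_edges_leaf(1) by simp
    next
      case False
      then show ?thesis
        unfolding degree_def incident
        using even_degree_covered_edges_inner Q.even_degree_covered_edges_inner
          finite_covered_edges Q.finite_covered_edges
        by (intro even_card_sym_diff) (auto simp: degree_def)
    qed
  qed
  moreover have "D \<subseteq> E" "finite D"
    using covered_edges_subset Q.covered_edges_subset finite_covered_edges Q.finite_covered_edges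
    by (auto simp: D_def)
  ultimately have "D = {}" using forest_even_subgraph_empty[OF simple acyclic] by blast
  then show ?thesis unfolding D_def by blast
qed

lemma subset_if_same_covered_edges:
  assumes "perfect_leaf_path_packing X V E \<Q>" and same: "covered_edges \<Q> = covered_edges \<P>"
  shows "\<P> \<subseteq> \<Q>"
proof
  interpret Q: perfect_leaf_path_packing X V E \<Q> by fact
  fix P assume P: "P \<in> \<P>"
  then obtain ps where "P = upath ps" using leaf_paths by (auto simp: leaf_to_leaf_paths_def)
  then have ps: "ps \<in> P" by (simp add: upath_def)
  note lp = packing_member[OF P ps]
  have "hd ps \<in> X" using lp(1) leaves_eq by (simp add: leaf_path_seq_def)
  then obtain Q qs where Q: "Q \<in> \<Q>" "qs \<in> Q" "hd qs = hd ps" by (rule Q.leaf_is_start)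
  note lq = Q.packing_member[OF Q(1,2)]
  have "last ps \<in> X" "last qs \<in> X" using lp(1) lq(1) leaves_eq
    by (simp_all add: leaf_path_seq_def)
  then have "ps = qs"
    using lp(1) lq(1) Q(3) path_edges_subset_covered_edges[OF P ps]
      Q.path_edges_subset_covered_edges[OF Q(1,2)] \<open>hd ps \<in> X\<close>
    by (intro max_degree_2_path_unique[OF finite_covered_edges degree_covered_edges_le_2])
      (auto simp: leaf_path_seq_length incident_covered_edges_leaf(2) same
        leaf_path_seq_def is_path_def)
  then show "P \<in> \<Q>" using lp(2) lq(2) Q(1) by simp
qed

end

theorem lemma7:
  fixes X V :: "'a set" and E :: "'a set set" and k :: nat
    and \<P> \<Q> :: "'a list set set"
  assumes "k \<ge> 1"
    and "binary_phylo_tree X V E"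
    and "card X = 2 * k"
    and "\<P> \<subseteq> leaf_to_leaf_paths V E" and "card \<P> = k" and "pairwise_edge_disjoint \<P>"
    and "\<Q> \<subseteq> leaf_to_leaf_paths V E" and "card \<Q> = k" and "pairwise_edge_disjoint \<Q>"
  shows "\<P> = \<Q>"
proof -
  have "finite \<P>" "finite \<Q>" using assms(1,5,8) by (auto intro: card_ge_0_finite)
  then have P: "perfect_leaf_path_packing X V E \<P>" and Q: "perfect_leaf_path_packing X V E \<Q>"
    using assms by (auto intro: perfect_leaf_path_packing.intro)
  have "covered_edges \<Q> = covered_edges \<P>"
    using perfect_leaf_path_packing.covered_edges_unique[OF P Q] .
  then show ?thesis
    using perfect_leaf_path_packing.subset_if_same_covered_edges[OF P Q]
      perfect_leaf_path_packing.subset_if_same_covered_edges[OF Q P]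
    by auto
qed

end
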